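(* Assume that $\mathfrak c$ is regular and that there exist $\mathfrak c$ pairwise incomparable selective ultrafilters on $\omega$. Then there exists $X$ with $\omega\subseteq X\subseteq\beta\omega$ such that $\omega^\alpha$ is relatively countably compact in $X^\alpha$ for each $\alpha<\mathfrak c$, but $\operatorname{CL}(X)$ is not pseudocompact.
   Context: $\beta\omega$ is the Stone–Čech compactification of the discrete space $\omega$ (ultrafilters on $\omega$). A free ultrafilter $q$ on $\omega$ is selective if for every partition of $\omega$ into pieces not in $q$ there is a set in $q$ meeting each piece in at most one point. Two ultrafilters $q_0,q_1$ on $\omega$ are incomparable if for every bijection $f:\omega\to\omega$, the ultrafilter generated by $\{f[A]:A\in q_0\}$ is not $q_1$. A subset $Y$ of a space $Z$ is relatively countably compact in $Z$ if every countably infinite subset of $Y$ has an accumulation point in $Z$. Powers carry the product topology. $\operatorname{CL}(X)$ is the set of nonempty closed subsets of $X$ with the Vietoris topology; pseudocompact means every continuous real-valued function is bounded. *)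

theory Defs
  imports "HOL-Analysis.Analysis" "HOL-Library.Disjoint_Sets"
begin

definition ultrafilter_on_nat :: "nat set set \<Rightarrow> bool" where
  "ultrafilter_on_nat U \<longleftrightarrow>
     UNIV \<in> U \<and> {} \<notin> U \<and>
     (\<forall>A B. A \<in> U \<and> B \<in> U \<longrightarrow> A \<inter> B \<in> U) \<and>
     (\<forall>A B. A \<in> U \<and> A \<subseteq> B \<longrightarrow> B \<in> U) \<and>
     (\<forall>A. A \<in> U \<or> - A \<in> U)"

definition beta_omega :: "nat set set set" where
  "beta_omega = {U. ultrafilter_on_nat U}"

text \<open>The principal ultrafilter at n; \<open>\<omega>\<close> is identified with the set of these.\<close>
definition principal_uf :: "nat \<Rightarrow> nat set set" where
  "principal_uf n = {A. n \<in> A}"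

definition omega_pts :: "nat set set set" where
  "omega_pts = range principal_uf"

definition beta_omega_top :: "nat set set topology" where
  "beta_omega_top = topology_generated_by {{U \<in> beta_omega. A \<in> U} | A. True}"

definition free_uf :: "nat set set \<Rightarrow> bool" where
  "free_uf q \<longleftrightarrow> ultrafilter_on_nat q \<and> (\<forall>A. finite A \<longrightarrow> A \<notin> q)"

definition selective :: "nat set set \<Rightarrow> bool" where
  "selective q \<longleftrightarrow> free_uf q \<and>
     (\<forall>P. partition_on UNIV P \<and> (\<forall>B\<in>P. B \<notin> q) \<longrightarrow>
        (\<exists>A\<in>q. \<forall>B\<in>P. card (A \<inter> B) \<le> 1 \<and> finite (A \<inter> B)))"

definition uf_image :: "(nat \<Rightarrow> nat) \<Rightarrow> nat set set \<Rightarrow> nat set set" where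
  "uf_image f q = {B. \<exists>A\<in>q. f ` A \<subseteq> B}"

definition incomparable :: "nat set set \<Rightarrow> nat set set \<Rightarrow> bool" where
  "incomparable q0 q1 \<longleftrightarrow> (\<forall>f. bij f \<longrightarrow> uf_image f q0 \<noteq> q1)"

definition rel_countably_compact :: "'a topology \<Rightarrow> 'a set \<Rightarrow> bool" where
  "rel_countably_compact Z Y \<longleftrightarrow> Y \<subseteq> topspace Z \<and>
     (\<forall>S. S \<subseteq> Y \<and> countable S \<and> infinite S \<longrightarrow> Z derived_set_of S \<noteq> {})"

definition CL :: "'a topology \<Rightarrow> 'a set set" where
  "CL T = {F. F \<noteq> {} \<and> closedin T F}"

definition vietoris :: "'a topology \<Rightarrow> 'a set topology" where
  "vietoris T = topology_generated_by
     ({{F \<in> CL T. F \<subseteq> U} | U. openin T U} \<union> {{F \<in> CL T. F \<inter> U \<noteq> {}} | U. openin T U})"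

definition pseudocompact :: "'a topology \<Rightarrow> bool" where
  "pseudocompact T \<longleftrightarrow> (\<forall>f. continuous_map T euclideanreal f \<longrightarrow> bounded (f ` topspace T))"

end

(*
  Let p_e (e in R) be the given selective ultrafilters, fix a well-order of R of
  type c and a surjection b |-> H_b from R onto the functions omega -> omega, and let
  X consist of omega together with the images H_b(p_e) for b below e.

  Fewer than c coordinates code a sequence in omega^I by fewer than c functions.
  By regularity of c they are all listed below some e, and the coordinatewise
  p_e-limit of the sequence is a point of X^I at which it accumulates.

  For the hyperspace, code the nodes of the binary tree by natural numbers. The
  finite sets D_n of principal ultrafilters at the nodes of level n are isolated
  points of CL(X), and sending D_n to 2^n and all other closed sets to 0 is an
  unbounded function; it is continuous because the D_n form a closed set. The
  delicate case is a closed set G of free ultrafilters with a common image r under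
  the level map. Two selective ultrafilters with a common free image are
  isomorphic, so incomparability forces all of G to come from a single p_e, hence
  |G| < c. A free ultrafilter contains at most one branch of the tree, so some
  branch lies in no member of G, and the closed sets missing that branch form a
  neighbourhood of G that contains no D_n.
*)

theory Submission
  imports Defs
begin

abbreviation uf where "uf \<equiv> ultrafilter_on_nat"

lemma uf_upclosed: "uf U \<Longrightarrow> A \<in> U \<Longrightarrow> A \<subseteq> B \<Longrightarrow> B \<in> U"
  unfolding ultrafilter_on_nat_def by blast

lemma uf_Int: "uf U \<Longrightarrow> A \<in> U \<Longrightarrow> B \<in> U \<Longrightarrow> A \<inter> B \<in> U"
  unfolding ultrafilter_on_nat_def by blast

lemma uf_empty: "uf U \<Longrightarrow> {} \<notin> U"
  unfolding ultrafilter_on_nat_def by blast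

lemma uf_UNIV: "uf U \<Longrightarrow> UNIV \<in> U"
  unfolding ultrafilter_on_nat_def by blast

lemma uf_Compl_iff: "uf U \<Longrightarrow> - A \<in> U \<longleftrightarrow> A \<notin> U"
  unfolding ultrafilter_on_nat_def by (metis Compl_disjoint)

lemma uf_INT:
  assumes "uf q" "finite J" "\<And>i. i \<in> J \<Longrightarrow> P i \<in> q"
  shows "(\<Inter>i\<in>J. P i) \<in> q"
  using assms(2,3) by induction (auto intro: uf_Int uf_UNIV assms(1))

lemma uf_maximal:
  assumes "uf a" "uf b" "a \<subseteq> b"
  shows "a = b"
  using assms uf_Compl_iff by blast

lemma uf_principal: "uf (principal_uf n)"
  unfolding ultrafilter_on_nat_def principal_uf_def by auto

lemma principal_uf_iff [simp]: "A \<in> principal_uf n \<longleftrightarrow> n \<in> A"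
  by (simp add: principal_uf_def)

lemma inj_principal_uf: "inj principal_uf"
  by (rule injI) (metis principal_uf_iff singletonD singletonI)

lemma uf_singleton: "uf x \<Longrightarrow> {a} \<in> x \<Longrightarrow> x = principal_uf a"
  by (metis uf_maximal uf_principal uf_upclosed principal_uf_iff empty_subsetI insert_subset subsetI)

lemma uf_finite_principal:
  assumes "uf x" "finite A" "A \<in> x"
  shows "\<exists>a\<in>A. x = principal_uf a"
  using assms(2,3)
proof induction
  case empty
  then show ?case using uf_empty[OF assms(1)] by simp
next
  case (insert a A)
  show ?case
  proof (cases "{a} \<in> x")
    case True
    then show ?thesis using uf_singleton[OF assms(1)] by blast
  next
    case False
    then have "insert a A \<inter> - {a} \<in> x"
      using uf_Int[OF assms(1) insert.prems] uf_Compl_iff[OF assms(1)] by blast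
    then have "A \<in> x" using uf_upclosed[OF assms(1)] by blast
    then show ?thesis using insert.IH by blast
  qed
qed

lemma free_uf_iff: "free_uf x \<longleftrightarrow> uf x \<and> x \<notin> omega_pts"
  unfolding free_uf_def omega_pts_def
  by (metis finite.emptyI finite_insert insertI1 principal_uf_iff rangeE rangeI uf_finite_principal)

lemma free_uf_uf: "free_uf x \<Longrightarrow> uf x"
  unfolding free_uf_def by blast

lemma free_uf_infinite: "free_uf x \<Longrightarrow> A \<in> x \<Longrightarrow> infinite A"
  unfolding free_uf_def by blast

lemma uf_image_iff: "uf q \<Longrightarrow> B \<in> uf_image f q \<longleftrightarrow> f -` B \<in> q"
  unfolding uf_image_def image_subset_iff_subset_vimage by (blast intro: uf_upclosed)

lemma uf_uf_image:
  assumes "uf q"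
  shows "uf (uf_image f q)"
  using assms unfolding ultrafilter_on_nat_def uf_image_iff[OF assms]
  by (simp add: vimage_Int vimage_Compl) (meson vimage_mono)

lemma uf_image_comp: "uf q \<Longrightarrow> uf_image f (uf_image g q) = uf_image (f \<circ> g) q"
  by (simp add: uf_image_iff uf_uf_image set_eq_iff vimage_comp)

lemma uf_image_cong:
  assumes "uf q" "Z \<in> q" "\<And>x. x \<in> Z \<Longrightarrow> f x = g x"
  shows "uf_image f q = uf_image g q"
proof -
  have "f -` B \<in> q \<longleftrightarrow> g -` B \<in> q" for B
  proof -
    have "f -` B \<inter> Z = g -` B \<inter> Z" using assms(3) by auto
    then show ?thesis by (metis assms(1,2) inf_le1 uf_Int uf_upclosed)
  qed
  then show ?thesis by (simp add: set_eq_iff uf_image_iff[OF assms(1)])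
qed

definition basic_open :: "nat set set set \<Rightarrow> nat set \<Rightarrow> nat set set set" where
  "basic_open X A = {z \<in> X. A \<in> z}"

lemma beta_omega_top_def': "beta_omega_top = topology_generated_by (range (basic_open beta_omega))"
  unfolding beta_omega_top_def basic_open_def by (simp add: full_SetCompr_eq)

lemma uf_iff_beta_omega: "uf z \<longleftrightarrow> z \<in> beta_omega"
  by (simp add: beta_omega_def)

lemma topspace_beta_omega_top [simp]: "topspace beta_omega_top = beta_omega"
proof -
  have "\<Union> (range (basic_open beta_omega)) = beta_omega"
    using uf_UNIV by (auto simp: basic_open_def uf_iff_beta_omega)
  then show ?thesis
    unfolding beta_omega_top_def' topology_generated_by_topspace by simp
qed

lemma openin_basic_open: "openin beta_omega_top (basic_open beta_omega A)"
  unfolding beta_omega_top_def' openin_topology_generated_by_iff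
  by (rule generate_topology_on.Basis) blast

lemma openin_beta_omega_top_basis:
  assumes "openin beta_omega_top V" "y \<in> V"
  shows "\<exists>A\<in>y. basic_open beta_omega A \<subseteq> V"
proof -
  have "generate_topology_on (range (basic_open beta_omega)) V"
    using assms(1) unfolding beta_omega_top_def' openin_topology_generated_by_iff .
  then have "\<forall>y\<in>V. y \<in> beta_omega \<longrightarrow> (\<exists>A\<in>y. basic_open beta_omega A \<subseteq> V)"
  proof induction
    case (Int a b)
    show ?case
    proof (intro ballI impI)
      fix y assume "y \<in> a \<inter> b" "y \<in> beta_omega"
      then obtain A B where "A \<in> y" "basic_open beta_omega A \<subseteq> a"
        and "B \<in> y" "basic_open beta_omega B \<subseteq> b"
        using Int.IH by blast
      moreover have "A \<inter> B \<in> y" using calculation \<open>y \<in> beta_omega\<close> uf_Int uf_iff_beta_omega by blast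
      ultimately show "\<exists>C\<in>y. basic_open beta_omega C \<subseteq> a \<inter> b"
        unfolding basic_open_def uf_iff_beta_omega[symmetric]
        by (intro bexI[of _ "A \<inter> B"]) (blast intro: uf_upclosed)+
    qed
  qed (unfold basic_open_def, blast+)
  moreover have "y \<in> beta_omega"
    using assms openin_subset by force
  ultimately show ?thesis
    using assms(2) by blast
qed

lemma topspace_subtopology_beta:
  "X \<subseteq> beta_omega \<Longrightarrow> topspace (subtopology beta_omega_top X) = X"
  by (simp add: Int_absorb1)

lemma openin_subtopology_basic_open:
  "X \<subseteq> beta_omega \<Longrightarrow> openin (subtopology beta_omega_top X) (basic_open X A)"
proof -
  assume "X \<subseteq> beta_omega"
  then have "basic_open X A = basic_open beta_omega A \<inter> X" by (auto simp: basic_open_def)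
  then show ?thesis by (simp add: openin_subtopology_Int openin_basic_open)
qed

lemma openin_subtopology_beta_basis:
  assumes "X \<subseteq> beta_omega" "openin (subtopology beta_omega_top X) V" "y \<in> V"
  shows "\<exists>A\<in>y. basic_open X A \<subseteq> V"
proof -
  obtain V' where V': "openin beta_omega_top V'" "V = V' \<inter> X"
    using assms(2) by (auto simp: openin_subtopology)
  then obtain A where "A \<in> y" "basic_open beta_omega A \<subseteq> V'"
    using openin_beta_omega_top_basis assms(3) by blast
  then show ?thesis
    using V'(2) assms(1) unfolding basic_open_def by blast
qed

lemma omega_pts_subset_beta_omega: "omega_pts \<subseteq> beta_omega"
  unfolding omega_pts_def using uf_principal uf_iff_beta_omega by blast

lemma principal_uf_in_basic_open:
  assumes "omega_pts \<subseteq> X"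
  shows "principal_uf n \<in> basic_open X A \<longleftrightarrow> n \<in> A"
proof -
  have "principal_uf n \<in> X" using assms unfolding omega_pts_def by blast
  then show ?thesis by (simp add: basic_open_def)
qed

lemma principal_uf_limit:
  assumes "X \<subseteq> beta_omega" "omega_pts \<subseteq> X" "uf q"
    and "openin (subtopology beta_omega_top X) V" "uf_image h q \<in> V"
  shows "{n. principal_uf (h n) \<in> V} \<in> q"
proof -
  obtain A where A: "A \<in> uf_image h q" "basic_open X A \<subseteq> V"
    using openin_subtopology_beta_basis assms(1,4,5) by blast
  have "h -` A \<in> q" using A(1) uf_image_iff[OF assms(3)] by simp
  moreover have "h -` A \<subseteq> {n. principal_uf (h n) \<in> V}"
    using A(2) by (auto simp: principal_uf_in_basic_open[OF assms(2)])
  ultimately show ?thesis by (rule uf_upclosed[OF assms(3)])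
qed

lemma principal_uf_limit_PiE:
  assumes X: "X \<subseteq> beta_omega" "omega_pts \<subseteq> X" and q: "uf q"
    and T: "openin (product_topology (\<lambda>_. subtopology beta_omega_top X) I) T"
      "(\<lambda>i\<in>I. uf_image (h i) q) \<in> T"
  shows "{n. (\<lambda>i\<in>I. principal_uf (h i n)) \<in> T} \<in> q"
proof -
  have "\<exists>U. finite {i \<in> I. U i \<noteq> topspace (subtopology beta_omega_top X)} \<and>
      (\<forall>i\<in>I. openin (subtopology beta_omega_top X) (U i)) \<and>
      (\<lambda>i\<in>I. uf_image (h i) q) \<in> PiE I U \<and> PiE I U \<subseteq> T"
    using T unfolding openin_product_topology_alt by blast
  then obtain U where U: "finite {i \<in> I. U i \<noteq> X}"
    "\<And>i. i \<in> I \<Longrightarrow> openin (subtopology beta_omega_top X) (U i)"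
    "(\<lambda>i\<in>I. uf_image (h i) q) \<in> PiE I U" "PiE I U \<subseteq> T"
    unfolding topspace_subtopology_beta[OF X(1)] by blast
  define J where "J = {i \<in> I. U i \<noteq> X}"
  have "(\<Inter>i\<in>J. {n. principal_uf (h i n) \<in> U i}) \<in> q"
  proof (rule uf_INT[OF q])
    show "finite J" using U(1) by (simp add: J_def)
    fix i assume "i \<in> J"
    then have "i \<in> I" by (simp add: J_def)
    then show "{n. principal_uf (h i n) \<in> U i} \<in> q"
      using U(2,3) by (intro principal_uf_limit[OF X q]) auto
  qed
  moreover have "(\<Inter>i\<in>J. {n. principal_uf (h i n) \<in> U i}) \<subseteq> {n. (\<lambda>i\<in>I. principal_uf (h i n)) \<in> T}"
  proof
    fix n assume n: "n \<in> (\<Inter>i\<in>J. {n. principal_uf (h i n) \<in> U i})"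
    have "principal_uf (h i n) \<in> U i" if "i \<in> I" for i
    proof (cases "i \<in> J")
      case True
      then show ?thesis using n by blast
    next
      case False
      then have "U i = X" using that by (simp add: J_def)
      then show ?thesis using X(2) by (auto simp: omega_pts_def)
    qed
    then show "n \<in> {n. (\<lambda>i\<in>I. principal_uf (h i n)) \<in> T}"
      using U(4) by (auto simp: restrict_PiE_iff)
  qed
  ultimately show ?thesis by (rule uf_upclosed[OF q])
qed

lemma rel_countably_compact_PiE_omega_pts:
  assumes X: "X \<subseteq> beta_omega" "omega_pts \<subseteq> X"
    and limits: "\<And>h :: 'i \<Rightarrow> nat \<Rightarrow> nat. \<exists>q. free_uf q \<and> (\<forall>i\<in>I. uf_image (h i) q \<in> X)"
  shows "rel_countably_compact (product_topology (\<lambda>_. subtopology beta_omega_top X) I)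
           (PiE I (\<lambda>_. omega_pts))"
  unfolding rel_countably_compact_def
proof (intro conjI allI impI)
  let ?P = "product_topology (\<lambda>_. subtopology beta_omega_top X) I"
  have top: "topspace ?P = PiE I (\<lambda>_. X)"
    by (simp add: Int_absorb1[OF X(1)])
  then show "PiE I (\<lambda>_. omega_pts) \<subseteq> topspace ?P"
    using X(2) by (simp add: PiE_mono)
  fix S assume S: "S \<subseteq> PiE I (\<lambda>_. omega_pts) \<and> countable S \<and> infinite S"
  define e where "e = from_nat_into S"
  have e: "bij_betw e UNIV S"
    using S by (simp add: e_def bij_betw_from_nat_into)
  define h where "h i n = inv principal_uf (e n i)" for i n
  have e_eq: "e n = (\<lambda>i\<in>I. principal_uf (h i n))" for n
  proof
    fix i
    have "e n \<in> PiE I (\<lambda>_. range principal_uf)"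
      using S bij_betw_apply[OF e] unfolding omega_pts_def by blast
    show "e n i = (\<lambda>i\<in>I. principal_uf (h i n)) i"
    proof (cases "i \<in> I")
      case True
      then have "e n i \<in> range principal_uf"
        using PiE_mem[OF \<open>e n \<in> PiE I (\<lambda>_. range principal_uf)\<close>] by blast
      then show ?thesis using True by (simp add: h_def f_inv_into_f)
    next
      case False
      then show ?thesis
        using PiE_arb[OF \<open>e n \<in> PiE I (\<lambda>_. range principal_uf)\<close>] by simp
    qed
  qed
  obtain q where q: "free_uf q" "\<And>i. i \<in> I \<Longrightarrow> uf_image (h i) q \<in> X"
    using limits by blast
  define y where "y = (\<lambda>i\<in>I. uf_image (h i) q)"
  have "y \<in> ?P derived_set_of S"
    unfolding in_derived_set_of
  proof (intro conjI allI impI)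
    show "y \<in> topspace ?P"
      unfolding top y_def using q(2) by simp
    fix T assume T: "y \<in> T \<and> openin ?P T"
    have "{n. e n \<in> T} \<in> q"
      unfolding e_eq using principal_uf_limit_PiE[OF X free_uf_uf[OF q(1)]] T unfolding y_def by blast
    moreover have "finite (e -` {y})"
      using bij_betw_imp_inj_on[OF e] by (simp add: finite_vimageI)
    ultimately have "infinite ({n. e n \<in> T} - e -` {y})"
      using free_uf_infinite[OF q(1)] by (simp add: Diff_infinite_finite)
    then obtain n where "n \<in> {n. e n \<in> T} - e -` {y}"
      using infinite_imp_nonempty by (metis ex_in_conv)
    moreover have "e n \<in> S"
      using bij_betw_apply[OF e UNIV_I] .
    ultimately show "\<exists>z. z \<noteq> y \<and> z \<in> S \<and> z \<in> T"
      by auto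
  qed
  then show "?P derived_set_of S \<noteq> {}" by blast
qed

lemma selective_free_uf: "selective q \<Longrightarrow> free_uf q"
  unfolding selective_def by blast

lemma selective_inj_on:
  assumes sel: "selective p" and free: "free_uf (uf_image u p)"
  shows "\<exists>Z\<in>p. inj_on u Z"
proof -
  have p: "uf p" using free_uf_uf[OF selective_free_uf[OF sel]] .
  define P where "P = (\<lambda>k. u -` {k}) ` range u"
  have "partition_on UNIV P"
  proof (rule partition_onI)
    show "\<Union> P = UNIV" by (auto simp: P_def)
    show "{} \<notin> P" by (auto simp: P_def)
    show "disjnt A B" if "A \<in> P" "B \<in> P" "A \<noteq> B" for A B
      using that by (auto simp: P_def disjnt_def)
  qed
  moreover have "B \<notin> p" if "B \<in> P" for B
  proof
    assume "B \<in> p"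
    moreover obtain k where "B = u -` {k}" using \<open>B \<in> P\<close> by (auto simp: P_def)
    ultimately have "{k} \<in> uf_image u p" by (simp add: uf_image_iff[OF p])
    then show False using free unfolding free_uf_def by blast
  qed
  ultimately obtain A where A: "A \<in> p" "\<And>B. B \<in> P \<Longrightarrow> card (A \<inter> B) \<le> 1 \<and> finite (A \<inter> B)"
    using sel unfolding selective_def by blast
  have "inj_on u A"
  proof (rule inj_onI)
    fix x y assume xy: "x \<in> A" "y \<in> A" "u x = u y"
    have "u -` {u x} \<in> P" by (simp add: P_def)
    then have "card (A \<inter> u -` {u x}) \<le> 1" "finite (A \<inter> u -` {u x})" using A(2) by blast+
    moreover have "x \<in> A \<inter> u -` {u x}" "y \<in> A \<inter> u -` {u x}" using xy by auto
    ultimately show "x = y" using card_le_Suc0_iff_eq[of "A \<inter> u -` {u x}"] by auto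
  qed
  then show ?thesis using A(1) by blast
qed

lemma free_uf_shrink:
  assumes "free_uf p" "Z \<in> p"
  shows "\<exists>Z'\<in>p. Z' \<subseteq> Z \<and> infinite (Z - Z')"
proof -
  have p: "uf p" using free_uf_uf[OF assms(1)] .
  obtain A B where AB: "A \<subseteq> Z" "B \<subseteq> Z" "infinite A" "infinite B" "A \<inter> B = {}"
    using infinite_split[OF free_uf_infinite[OF assms]] by metis
  show ?thesis
  proof (cases "A \<in> p")
    case True
    have "B \<subseteq> Z - A" using AB(2,5) by blast
    then have "infinite (Z - A)" using AB(4) by (rule infinite_super)
    then show ?thesis using True AB(1) by blast
  next
    case False
    then have "Z \<inter> - A \<in> p" using uf_Int[OF p assms(2)] uf_Compl_iff[OF p] by blast
    moreover have "Z - Z \<inter> - A = A" using AB(1) by blast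
    ultimately show ?thesis using AB(3) by (intro bexI[of _ "Z \<inter> - A"]) simp_all
  qed
qed

lemma inj_on_extend_to_bij:
  fixes w :: "nat \<Rightarrow> nat"
  assumes "inj_on w Z" "infinite (- Z)" "infinite (- w ` Z)"
  shows "\<exists>f. bij f \<and> (\<forall>x\<in>Z. f x = w x)"
proof -
  have "bij_betw (from_nat_into (- w ` Z) \<circ> to_nat_on (- Z)) (- Z) (- w ` Z)"
    using assms(2,3) by (intro bij_betw_trans[where B = UNIV] to_nat_on_infinite bij_betw_from_nat_into) simp_all
  then obtain k where k: "bij_betw k (- Z) (- w ` Z)" by blast
  define f where "f x = (if x \<in> Z then w x else k x)" for x
  have "bij_betw f Z (w ` Z)"
    using inj_on_imp_bij_betw[OF assms(1)] by (rule bij_betw_cong[THEN iffD1, rotated]) (simp add: f_def)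
  moreover have "bij_betw f (- Z) (- w ` Z)"
    using k by (rule bij_betw_cong[THEN iffD1, rotated]) (simp add: f_def)
  ultimately have "bij_betw f (Z \<union> - Z) (w ` Z \<union> - w ` Z)"
    by (rule bij_betw_combine) blast
  then show ?thesis by (auto simp: f_def)
qed

lemma uf_image_inj_on_bij:
  assumes "free_uf p" "Z \<in> p" "inj_on w Z"
  shows "\<exists>f. bij f \<and> uf_image f p = uf_image w p"
proof -
  obtain Z' where Z': "Z' \<in> p" "Z' \<subseteq> Z" "infinite (Z - Z')"
    using free_uf_shrink[OF assms(1,2)] by blast
  have "infinite (- Z')"
    using Z'(3) by (rule infinite_super[rotated]) blast
  moreover have "infinite (w ` (Z - Z'))"
    using Z'(3) inj_on_subset[OF assms(3), of "Z - Z'"] finite_imageD by blast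
  then have "infinite (- w ` Z')"
    by (rule infinite_super[rotated]) (use assms(3) Z'(2) in \<open>auto simp: inj_on_def\<close>)
  ultimately obtain f where "bij f" "\<And>x. x \<in> Z' \<Longrightarrow> f x = w x"
    using inj_on_extend_to_bij inj_on_subset[OF assms(3) Z'(2)] by blast
  then show ?thesis
    using uf_image_cong[OF free_uf_uf[OF assms(1)] Z'(1)] by blast
qed

lemma uf_image_inv_into:
  assumes p: "uf p" and p': "uf p'" and eq: "uf_image u p = uf_image v p'"
    and Z': "Z' \<in> p'" "inj_on v Z'"
  shows "p' = uf_image (inv_into Z' v \<circ> u) p"
proof (rule uf_maximal[OF p' uf_uf_image[OF p]], rule subsetI)
  fix B assume "B \<in> p'"
  then have "B \<inter> Z' \<in> p'" using uf_Int[OF p' _ Z'(1)] by blast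
  then have "v -` v ` (B \<inter> Z') \<in> p'" by (rule uf_upclosed[OF p']) blast
  then have "v ` (B \<inter> Z') \<in> uf_image u p" unfolding eq uf_image_iff[OF p'] .
  then have "u -` v ` (B \<inter> Z') \<in> p" unfolding uf_image_iff[OF p] .
  moreover have "u -` v ` (B \<inter> Z') \<subseteq> (inv_into Z' v \<circ> u) -` B"
    using Z'(2) by (auto simp: inv_into_f_f)
  ultimately show "B \<in> uf_image (inv_into Z' v \<circ> u) p"
    unfolding uf_image_iff[OF p] by (rule uf_upclosed[OF p])
qed

lemma selective_RK_equivalent:
  assumes sel: "selective p" "selective p'"
    and eq: "uf_image u p = uf_image v p'" and free: "free_uf (uf_image u p)"
  shows "\<exists>f. bij f \<and> uf_image f p = p'"
proof -
  have p: "uf p" and p': "uf p'"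
    using sel free_uf_uf selective_free_uf by blast+
  obtain Z where Z: "Z \<in> p" "inj_on u Z"
    using selective_inj_on[OF sel(1) free] by blast
  obtain Z' where Z': "Z' \<in> p'" "inj_on v Z'"
    using selective_inj_on[OF sel(2)] free eq by auto
  have "v -` v ` Z' \<in> p'" by (rule uf_upclosed[OF p' Z'(1)]) blast
  then have "v ` Z' \<in> uf_image u p" unfolding eq uf_image_iff[OF p'] .
  then have "u -` v ` Z' \<in> p" unfolding uf_image_iff[OF p] .
  then have "Z \<inter> u -` v ` Z' \<in> p" by (rule uf_Int[OF p Z(1)])
  moreover have "inj_on (inv_into Z' v \<circ> u) (Z \<inter> u -` v ` Z')"
    using Z(2) by (auto simp: inj_on_def inv_into_injective)
  ultimately show ?thesis
    using uf_image_inj_on_bij[OF selective_free_uf[OF sel(1)]] uf_image_inv_into[OF p p' eq Z'] by metis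
qed

lemma selective_incomparable_no_common_image:
  assumes "selective q" "selective q'" "incomparable q q'"
    and "uf_image u q = uf_image v q'" "free_uf (uf_image u q)"
  shows False
  using selective_RK_equivalent[OF assms(1,2,4,5)] assms(3) unfolding incomparable_def by blast

text \<open>Natural numbers code the nodes of the binary tree; \<open>branch x\<close> is the branch
  through the tree determined by \<open>x \<subseteq> \<omega>\<close>.\<close>

definition node :: "nat \<Rightarrow> bool list" where
  "node = from_nat_into UNIV"

definition height :: "nat \<Rightarrow> nat" where
  "height m = length (node m)"

definition level :: "nat \<Rightarrow> nat set" where
  "level n = {m. height m = n}"

definition level_pts :: "nat \<Rightarrow> nat set set set" where
  "level_pts n = principal_uf ` level n"

definition branch :: "nat set \<Rightarrow> nat \<Rightarrow> nat" where
  "branch x n = inv node (map (\<lambda>k. k \<in> x) [0..<n])"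

lemma bij_node: "bij node"
  unfolding node_def by (rule bij_betw_from_nat_into) (auto simp: infinite_UNIV_listI)

lemma node_inv_node [simp]: "node (inv node l) = l"
  using bij_node by (simp add: bij_is_surj surj_f_inv_f)

lemma height_branch [simp]: "height (branch x n) = n"
  by (simp add: height_def branch_def)

lemma finite_height_vimage:
  assumes "finite K"
  shows "finite (height -` K)"
proof -
  have "{l :: bool list. length l \<in> K} \<subseteq> {l. set l \<subseteq> UNIV \<and> length l \<le> Max K}"
    using assms by auto
  then have "finite {l :: bool list. length l \<in> K}"
    using finite_lists_length_le[of "UNIV :: bool set" "Max K"] finite_subset by auto
  moreover have "height -` K = node -` {l. length l \<in> K}"
    by (auto simp: height_def)
  ultimately show ?thesis
    using finite_vimageI bij_is_inj[OF bij_node] by metis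
qed

lemma finite_level: "finite (level n)"
  using finite_height_vimage[of "{n}"] by (simp add: level_def vimage_def)

lemma card_level: "card (level n) = 2 ^ n"
proof -
  have "node ` level n = {l. set l \<subseteq> UNIV \<and> length l = n}"
    by (auto simp: level_def height_def image_iff) (metis node_inv_node)
  moreover have "inj_on node (level n)"
    using bij_is_inj[OF bij_node] by (rule inj_on_subset) simp
  ultimately show ?thesis
    using card_lists_length_eq[of "UNIV :: bool set" n] card_image by fastforce
qed

lemma card_level_pts: "card (level_pts n) = 2 ^ n"
  unfolding level_pts_def
  using card_level card_image inj_on_subset[OF inj_principal_uf] by (metis subset_UNIV)

lemma level_pts_nonempty: "level_pts n \<noteq> {}"
  unfolding level_pts_def level_def using height_branch by blast

lemma level_pts_subset_omega_pts: "level_pts n \<subseteq> omega_pts"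
  unfolding level_pts_def omega_pts_def by blast

lemma principal_uf_in_level_pts: "principal_uf a \<in> level_pts n \<longleftrightarrow> height a = n"
  using injD[OF inj_principal_uf] by (auto simp: level_pts_def level_def)

lemma free_uf_uf_image_height:
  assumes "free_uf y"
  shows "free_uf (uf_image height y)"
  unfolding free_uf_def
  using free_uf_infinite[OF assms] finite_height_vimage uf_uf_image[OF free_uf_uf[OF assms]]
  by (auto simp: uf_image_iff[OF free_uf_uf[OF assms]])

lemma branch_eqD:
  assumes "branch x n = branch x' n" "k < n"
  shows "k \<in> x \<longleftrightarrow> k \<in> x'"
proof -
  have "map (\<lambda>k. k \<in> x) [0..<n] = map (\<lambda>k. k \<in> x') [0..<n]"
    using arg_cong[OF assms(1), of node] by (simp add: branch_def)
  then show ?thesis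
    using assms(2) by (metis (no_types) diff_zero length_upt nth_map nth_upt plus_nat.add_0)
qed

lemma free_uf_branch_unique:
  assumes "free_uf y" "range (branch x) \<in> y" "range (branch x') \<in> y"
  shows "x = x'"
proof (rule set_eqI)
  fix k
  have "range (branch x) \<inter> range (branch x') \<in> y"
    using uf_Int[OF free_uf_uf[OF assms(1)] assms(2,3)] .
  then have "infinite (range (branch x) \<inter> range (branch x'))"
    using free_uf_infinite[OF assms(1)] by blast
  then have "\<not> range (branch x) \<inter> range (branch x') \<subseteq> height -` {..k}"
    using finite_height_vimage[of "{..k}"] finite_subset by blast
  then obtain m where m: "m \<in> range (branch x) \<inter> range (branch x')" "m \<notin> height -` {..k}"
    by blast
  then obtain n n' where "m = branch x n" "m = branch x' n'" by blast
  moreover from this have "n = n'" by (metis height_branch)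
  ultimately show "k \<in> x \<longleftrightarrow> k \<in> x'"
    using m(2) by (intro branch_eqD[of x n x']) auto
qed

lemma exists_branch_avoiding:
  assumes "(card_of G, card_of (UNIV :: nat set set)) \<in> ordLess" "\<forall>y\<in>G. free_uf y"
  shows "\<exists>x. \<forall>y\<in>G. range (branch x) \<notin> y"
proof (rule ccontr)
  assume "\<nexists>x. \<forall>y\<in>G. range (branch x) \<notin> y"
  then obtain c where c: "\<And>x. c x \<in> G \<and> range (branch x) \<in> c x"
    by metis
  have "inj c"
    using c assms(2) free_uf_branch_unique by (metis injI)
  then have "(card_of (UNIV :: nat set set), card_of G) \<in> ordLeq"
    using c card_of_ordLeq by blast
  then show False
    using assms(1) not_ordLess_ordLeq by blast
qed

lemma uf_mem_level_pts_iff: "uf z \<Longrightarrow> z \<in> level_pts n \<longleftrightarrow> level n \<in> z"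
  using uf_finite_principal[OF _ finite_level] by (auto simp: level_pts_def)

lemma topspace_vietoris [simp]: "topspace (vietoris T) = CL T"
proof -
  let ?S = "{{F \<in> CL T. F \<subseteq> U} | U. openin T U}"
  let ?M = "{{F \<in> CL T. F \<inter> U \<noteq> {}} | U. openin T U}"
  have "CL T = {F \<in> CL T. F \<subseteq> topspace T}"
    using closedin_subset by (auto simp: CL_def)
  then have "CL T \<in> ?S \<union> ?M"
    using openin_topspace by blast
  then have "CL T \<subseteq> \<Union> (?S \<union> ?M)"
    by (rule Union_upper)
  moreover have "\<Union> (?S \<union> ?M) \<subseteq> CL T"
    by auto
  ultimately show ?thesis
    unfolding vietoris_def topology_generated_by_topspace by (rule antisym[rotated])
qed

lemma openin_vietoris_subset: "openin T U \<Longrightarrow> openin (vietoris T) {F \<in> CL T. F \<subseteq> U}"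
  unfolding vietoris_def openin_topology_generated_by_iff
  by (rule generate_topology_on.Basis) blast

lemma openin_vietoris_meets: "openin T U \<Longrightarrow> openin (vietoris T) {F \<in> CL T. F \<inter> U \<noteq> {}}"
  unfolding vietoris_def openin_topology_generated_by_iff
  by (rule generate_topology_on.Basis) blast

lemma CL_subset_topspace: "G \<in> CL T \<Longrightarrow> G \<subseteq> topspace T"
  unfolding CL_def using closedin_subset by blast

lemma continuous_map_constant_off_isolated:
  assumes "closedin T D" "\<And>d. d \<in> D \<Longrightarrow> openin T {d}"
    and "\<And>x. x \<in> topspace T - D \<Longrightarrow> f x = c" "f ` topspace T \<subseteq> topspace Y"
  shows "continuous_map T Y f"
  unfolding continuous_map_def
proof (intro conjI allI impI)
  show "f \<in> topspace T \<rightarrow> topspace Y" using assms(4) by blast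
  fix U assume "openin Y U"
  show "openin T {x \<in> topspace T. f x \<in> U}"
  proof (subst openin_subopen, intro ballI)
    fix x assume x: "x \<in> {x \<in> topspace T. f x \<in> U}"
    show "\<exists>V. openin T V \<and> x \<in> V \<and> V \<subseteq> {x \<in> topspace T. f x \<in> U}"
    proof (cases "x \<in> D")
      case True
      then show ?thesis using assms(2) x by blast
    next
      case False
      have "openin T (topspace T - D)"
        using assms(1) by (rule openin_diff[OF openin_topspace])
      moreover have "topspace T - D \<subseteq> {x \<in> topspace T. f x \<in> U}"
        using assms(3) x False by auto
      ultimately show ?thesis using False x by blast
    qed
  qed
qed

context
  fixes X :: "nat set set set"
  assumes X: "X \<subseteq> beta_omega" "omega_pts \<subseteq> X"
begin

lemma uf_of_mem: "z \<in> X \<Longrightarrow> uf z"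
  using X(1) uf_iff_beta_omega by blast

lemma principal_uf_mem: "principal_uf a \<in> X"
  using X(2) by (auto simp: omega_pts_def)

lemma openin_vietoris_meets_basic_open:
  "openin (vietoris (subtopology beta_omega_top X))
    {F \<in> CL (subtopology beta_omega_top X). F \<inter> basic_open X A \<noteq> {}}"
  by (intro openin_vietoris_meets openin_subtopology_basic_open[OF X(1)])

lemma openin_vietoris_subset_basic_open:
  "openin (vietoris (subtopology beta_omega_top X))
    {F \<in> CL (subtopology beta_omega_top X). F \<subseteq> basic_open X A}"
  by (intro openin_vietoris_subset openin_subtopology_basic_open[OF X(1)])

lemma CL_subset: "G \<in> CL (subtopology beta_omega_top X) \<Longrightarrow> G \<subseteq> X"
  using CL_subset_topspace Int_absorb1[OF X(1)] by fastforce

lemma level_pts_in_CL: "level_pts n \<in> CL (subtopology beta_omega_top X)"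
proof -
  have "level_pts n \<subseteq> X" using X(2) level_pts_subset_omega_pts by blast
  moreover have "X - level_pts n = basic_open X (- level n)"
    using uf_mem_level_pts_iff uf_Compl_iff uf_of_mem by (auto simp: basic_open_def)
  ultimately show ?thesis
    using openin_subtopology_basic_open[OF X(1)] level_pts_nonempty
    by (simp add: CL_def closedin_def Int_absorb1[OF X(1)])
qed

lemma level_pts_isolated: "openin (vietoris (subtopology beta_omega_top X)) {level_pts n}"
proof -
  let ?T = "subtopology beta_omega_top X"
  define W where "W = {F \<in> CL ?T. F \<subseteq> basic_open X (level n)} \<inter>
    (\<Inter>m\<in>level n. {F \<in> CL ?T. F \<inter> basic_open X {m} \<noteq> {}})"
  have "openin (vietoris ?T) W"
    unfolding W_def using finite_level level_pts_nonempty[of n] openin_vietoris_meets_basic_open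
    by (intro openin_Int openin_Inter openin_vietoris_subset_basic_open) (auto simp: level_pts_def)
  moreover have "W = {level_pts n}"
  proof (intro equalityI subsetI)
    fix F assume F: "F \<in> W"
    have "F \<subseteq> level_pts n"
      using F uf_mem_level_pts_iff uf_of_mem by (auto simp: W_def basic_open_def)
    moreover have "principal_uf m \<in> F" if m: "m \<in> level n" for m
    proof -
      obtain z where "z \<in> F" "z \<in> X" "{m} \<in> z"
        using F m unfolding W_def basic_open_def by blast
      then show ?thesis using uf_singleton uf_of_mem by blast
    qed
    ultimately show "F \<in> {level_pts n}" by (auto simp: level_pts_def)
  next
    fix F assume "F \<in> {level_pts n}"
    then show "F \<in> W"
      using level_pts_in_CL principal_uf_mem
      by (auto simp: W_def basic_open_def level_pts_def)
  qed
  ultimately show ?thesis by simp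
qed

lemma level_pts_nbhd_principal:
  assumes G: "G \<in> CL (subtopology beta_omega_top X)" "G \<notin> range level_pts" "principal_uf m \<in> G"
  shows "\<exists>W. openin (vietoris (subtopology beta_omega_top X)) W \<and> G \<in> W \<and>
    W \<inter> range level_pts = {}"
proof -
  let ?T = "subtopology beta_omega_top X"
  define M where "M = {F \<in> CL ?T. F \<inter> basic_open X {m} \<noteq> {}}"
  have GX: "G \<subseteq> X" using CL_subset[OF G(1)] .
  have "G \<in> M" using G(1,3) principal_uf_mem by (auto simp: M_def basic_open_def)
  have M: "M \<inter> range level_pts \<subseteq> {level_pts (height m)}"
  proof
    fix F assume "F \<in> M \<inter> range level_pts"
    then obtain k z where "F = level_pts k" "z \<in> F" "z \<in> X" "{m} \<in> z"
      by (auto simp: M_def basic_open_def)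
    then show "F \<in> {level_pts (height m)}"
      using uf_singleton uf_of_mem principal_uf_in_level_pts by (metis singletonI)
  qed
  have "G \<noteq> level_pts (height m)" using G(2) by blast
  then consider z where "z \<in> G" "z \<notin> level_pts (height m)"
    | j where "principal_uf j \<in> level_pts (height m)" "principal_uf j \<notin> G"
    by (auto simp: level_pts_def)
  then show ?thesis
  proof cases
    case (1 z)
    define W where "W = M \<inter> {F \<in> CL ?T. F \<inter> basic_open X (- level (height m)) \<noteq> {}}"
    have z: "z \<in> X" "uf z" using 1 GX uf_of_mem by auto
    then have "- level (height m) \<in> z"
      using 1(2) by (simp add: uf_Compl_iff uf_mem_level_pts_iff)
    then have "G \<in> W"
      using 1(1) z \<open>G \<in> M\<close> G(1) unfolding W_def basic_open_def by blast
    moreover have "level_pts (height m) \<notin> W"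
      using uf_mem_level_pts_iff uf_Compl_iff uf_of_mem by (auto simp: W_def basic_open_def)
    then have "W \<inter> range level_pts = {}" using M by (auto simp: W_def)
    moreover have "openin (vietoris ?T) W"
      unfolding W_def M_def by (intro openin_Int openin_vietoris_meets_basic_open)
    ultimately show ?thesis by blast
  next
    case (2 j)
    define W where "W = M \<inter> {F \<in> CL ?T. F \<subseteq> basic_open X (- {j})}"
    have "G \<subseteq> basic_open X (- {j})"
      using 2 GX uf_singleton uf_Compl_iff uf_of_mem by (fastforce simp: basic_open_def)
    then have "G \<in> W" using \<open>G \<in> M\<close> G(1) by (simp add: W_def)
    moreover have "level_pts (height m) \<notin> W"
      using 2 by (auto simp: W_def basic_open_def)
    then have "W \<inter> range level_pts = {}" using M by (auto simp: W_def)
    moreover have "openin (vietoris ?T) W"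
      unfolding W_def M_def
      by (intro openin_Int openin_vietoris_meets_basic_open openin_vietoris_subset_basic_open)
    ultimately show ?thesis by blast
  qed
qed

lemma level_pts_nbhd_heights:
  assumes G: "G \<in> CL (subtopology beta_omega_top X)" "y \<in> G" "y' \<in> G"
    and ne: "uf_image height y \<noteq> uf_image height y'"
  shows "\<exists>W. openin (vietoris (subtopology beta_omega_top X)) W \<and> G \<in> W \<and>
    W \<inter> range level_pts = {}"
proof -
  let ?T = "subtopology beta_omega_top X"
  have GX: "G \<subseteq> X" using CL_subset[OF G(1)] .
  then have y: "uf y" "uf y'" using G(2,3) uf_of_mem by auto
  obtain B where "B \<in> uf_image height y" "B \<notin> uf_image height y'"
    using uf_maximal[OF uf_uf_image[OF y(1)] uf_uf_image[OF y(2)]] ne by blast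
  then have B: "height -` B \<in> y" "height -` (- B) \<in> y'"
    by (simp_all add: uf_image_iff y uf_Compl_iff[symmetric] vimage_Compl)
  define W where "W = {F \<in> CL ?T. F \<inter> basic_open X (height -` B) \<noteq> {}} \<inter>
    {F \<in> CL ?T. F \<inter> basic_open X (height -` (- B)) \<noteq> {}}"
  have "G \<in> W"
    using G GX B unfolding W_def basic_open_def by blast
  moreover have "level_pts n \<notin> W" for n
    by (auto simp: W_def basic_open_def level_pts_def level_def)
  then have "W \<inter> range level_pts = {}" by blast
  moreover have "openin (vietoris ?T) W"
    unfolding W_def by (intro openin_Int openin_vietoris_meets_basic_open)
  ultimately show ?thesis by blast
qed

lemma level_pts_nbhd_small:
  assumes G: "G \<in> CL (subtopology beta_omega_top X)" "\<forall>y\<in>G. free_uf y"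
    and small: "(card_of G, card_of (UNIV :: nat set set)) \<in> ordLess"
  shows "\<exists>W. openin (vietoris (subtopology beta_omega_top X)) W \<and> G \<in> W \<and>
    W \<inter> range level_pts = {}"
proof -
  let ?T = "subtopology beta_omega_top X"
  obtain x where x: "\<forall>y\<in>G. range (branch x) \<notin> y"
    using exists_branch_avoiding[OF small G(2)] by blast
  define W where "W = {F \<in> CL ?T. F \<subseteq> basic_open X (- range (branch x))}"
  have GX: "G \<subseteq> X" using CL_subset[OF G(1)] .
  then have "G \<in> W"
    using G(1) x uf_Compl_iff uf_of_mem unfolding W_def basic_open_def by blast
  moreover have "level_pts n \<notin> W" for n
  proof -
    have "principal_uf (branch x n) \<in> level_pts n"
      by (simp add: principal_uf_in_level_pts)
    then show ?thesis by (auto simp: W_def basic_open_def)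
  qed
  then have "W \<inter> range level_pts = {}" by blast
  moreover have "openin (vietoris ?T) W"
    unfolding W_def by (rule openin_vietoris_subset_basic_open)
  ultimately show ?thesis by blast
qed

context
  assumes fibres: "\<And>r. free_uf r \<Longrightarrow>
      (card_of {y \<in> X. free_uf y \<and> uf_image height y = r}, card_of (UNIV :: nat set set)) \<in> ordLess"
begin

lemma level_pts_nbhd:
  assumes G: "G \<in> CL (subtopology beta_omega_top X)" "G \<notin> range level_pts"
  shows "\<exists>W. openin (vietoris (subtopology beta_omega_top X)) W \<and> G \<in> W \<and>
    W \<inter> range level_pts = {}"
proof (cases "G \<inter> omega_pts = {}")
  case False
  then obtain m where "principal_uf m \<in> G" by (auto simp: omega_pts_def)
  then show ?thesis using level_pts_nbhd_principal[OF G] by blast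
next
  case True
  have GX: "G \<subseteq> X" using CL_subset[OF G(1)] .
  then have free: "\<forall>y\<in>G. free_uf y"
    using True uf_of_mem free_uf_iff by blast
  obtain y0 where y0: "y0 \<in> G" using G(1) by (auto simp: CL_def)
  show ?thesis
  proof (cases "\<forall>y\<in>G. uf_image height y = uf_image height y0")
    case True
    then have "G \<subseteq> {y \<in> X. free_uf y \<and> uf_image height y = uf_image height y0}"
      using GX free by blast
    then have "(card_of G, card_of (UNIV :: nat set set)) \<in> ordLess"
      using fibres[OF free_uf_uf_image_height] free y0 card_of_mono1 ordLeq_ordLess_trans by blast
    then show ?thesis using level_pts_nbhd_small[OF G(1) free] by blast
  next
    case False
    then show ?thesis using level_pts_nbhd_heights[OF G(1) _ y0] by blast
  qed
qed

lemma closedin_range_level_pts: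
  "closedin (vietoris (subtopology beta_omega_top X)) (range level_pts)"
  unfolding closedin_def
proof
  let ?V = "vietoris (subtopology beta_omega_top X)"
  show "range level_pts \<subseteq> topspace ?V" using level_pts_in_CL by auto
  show "openin ?V (topspace ?V - range level_pts)"
  proof (subst openin_subopen, intro ballI)
    fix G assume "G \<in> topspace ?V - range level_pts"
    then obtain W where "openin ?V W" "G \<in> W" "W \<inter> range level_pts = {}"
      using level_pts_nbhd by (metis DiffD1 DiffD2 topspace_vietoris)
    then show "\<exists>W. openin ?V W \<and> G \<in> W \<and> W \<subseteq> topspace ?V - range level_pts"
      using openin_subset by blast
  qed
qed

lemma not_pseudocompact_vietoris:
  "\<not> pseudocompact (vietoris (subtopology beta_omega_top X))"
proof
  let ?V = "vietoris (subtopology beta_omega_top X)"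
  define f where "f G = (if G \<in> range level_pts then real (card G) else 0)" for G
  assume "pseudocompact ?V"
  moreover have "continuous_map ?V euclideanreal f"
    by (rule continuous_map_constant_off_isolated[where D = "range level_pts" and c = 0])
      (auto simp: f_def closedin_range_level_pts level_pts_isolated)
  ultimately obtain B where B: "\<And>G. G \<in> CL (subtopology beta_omega_top X) \<Longrightarrow> \<bar>f G\<bar> \<le> B"
    unfolding pseudocompact_def bounded_iff by (metis image_eqI real_norm_def topspace_vietoris)
  obtain n :: nat where "B < n" using reals_Archimedean2 by blast
  also have "\<dots> < 2 ^ n" by (metis of_nat_less_two_power)
  also have "\<dots> = f (level_pts n)" by (auto simp: f_def card_level_pts)
  also have "\<dots> \<le> B" using B[OF level_pts_in_CL[of n]] by (rule abs_le_D1)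
  finally show False by simp
qed

end

end

lemma card_of_under_ordLess:
  assumes "infinite (UNIV :: 'k set)"
  shows "(card_of (under (card_of (UNIV :: 'k set)) e), card_of (UNIV :: 'k set)) \<in> ordLess"
proof -
  let ?r = "card_of (UNIV :: 'k set)"
  have "(card_of (underS ?r e), ?r) \<in> ordLess"
    by (rule card_of_underS[OF card_of_Card_order]) (simp add: Field_card_of)
  moreover have "(card_of {e}, ?r) \<in> ordLess"
    using finite_ordLess_infinite[OF card_of_Well_order card_of_Well_order, of "{e}" UNIV] assms
    by (simp add: Field_card_of)
  ultimately have "(card_of ({e} \<union> underS ?r e), ?r) \<in> ordLess"
    using card_of_Un_ordLess_infinite[OF assms] by blast
  moreover have "under ?r e \<subseteq> {e} \<union> underS ?r e"
    unfolding under_def underS_def by blast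
  ultimately show ?thesis
    using card_of_mono1 ordLeq_ordLess_trans by blast
qed

text \<open>\<open>(b, e) \<in> card_of UNIV\<close> says that \<open>b\<close> precedes \<open>e\<close> in a well-order of \<open>'k\<close> of
  order type \<open>|'k|\<close>.\<close>

definition image_space :: "('k \<Rightarrow> nat set set) \<Rightarrow> ('k \<Rightarrow> nat \<Rightarrow> nat) \<Rightarrow> nat set set set" where
  "image_space p H =
    omega_pts \<union> {uf_image (H b) (p e) | b e. (b, e) \<in> card_of (UNIV :: 'k set)}"

lemma image_space_limits:
  fixes p :: "'k \<Rightarrow> nat set set" and h :: "'i \<Rightarrow> nat \<Rightarrow> nat"
  assumes reg: "regularCard (card_of (UNIV :: 'k set))" and "surj H" "\<And>e. free_uf (p e)"
    and I: "(card_of I, card_of (UNIV :: 'k set)) \<in> ordLess"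
  shows "\<exists>q. free_uf q \<and> (\<forall>i\<in>I. uf_image (h i) q \<in> image_space p H)"
proof -
  let ?r = "card_of (UNIV :: 'k set)"
  have wo: "wo_rel ?r" unfolding wo_rel_def by (rule card_of_Well_order)
  define B where "B = (\<lambda>i. inv H (h i)) ` I"
  have "(card_of B, ?r) \<in> ordLess"
    using card_of_image I ordLeq_ordLess_trans unfolding B_def by blast
  moreover have "relChain ?r (under ?r)"
    unfolding relChain_def using under_incr[OF wo_rel.TRANS[OF wo]] by blast
  moreover have "B \<subseteq> (\<Union>e \<in> Field ?r. under ?r e)"
    using Refl_under_in[OF wo_rel.REFL[OF wo]] by (auto simp: Field_card_of)
  ultimately obtain a where "B \<subseteq> under ?r a"
    using regularCard_UNION[OF card_of_Card_order reg] by blast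
  then have "uf_image (h i) (p a) \<in> image_space p H" if "i \<in> I" for i
    using that \<open>surj H\<close> by (auto simp: B_def under_def image_space_def surj_f_inv_f)
  then show ?thesis using assms(3) by blast
qed

lemma image_space_fibre_small:
  fixes p :: "'k \<Rightarrow> nat set set"
  assumes inf: "infinite (UNIV :: 'k set)" and sel: "\<And>e. selective (p e)"
    and inc: "\<And>e e'. e \<noteq> e' \<Longrightarrow> incomparable (p e) (p e')" and r: "free_uf r"
  shows "(card_of {y \<in> image_space p H. free_uf y \<and> uf_image height y = r},
      card_of (UNIV :: 'k set)) \<in> ordLess"
proof -
  let ?r = "card_of (UNIV :: 'k set)"
  define Y where "Y = {y \<in> image_space p H. free_uf y \<and> uf_image height y = r}"
  have p: "uf (p e)" for e using free_uf_uf selective_free_uf sel by blast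
  have Y: "\<exists>b e. b \<in> under ?r e \<and> y = uf_image (H b) (p e) \<and> uf_image (height \<circ> H b) (p e) = r"
    if "y \<in> Y" for y
    using that free_uf_iff by (fastforce simp: Y_def image_space_def under_def uf_image_comp[OF p, symmetric])
  have same_index: "e = e'"
    if "uf_image (height \<circ> H b) (p e) = r" "uf_image (height \<circ> H b') (p e') = r" for b b' e e'
    using selective_incomparable_no_common_image[OF sel sel inc] that r by metis
  obtain e0 where e0: "Y \<subseteq> (\<lambda>b. uf_image (H b) (p e0)) ` under ?r e0"
  proof (cases "Y = {}")
    case False
    then obtain b0 e0 where "uf_image (height \<circ> H b0) (p e0) = r" using Y by blast
    then have "Y \<subseteq> (\<lambda>b. uf_image (H b) (p e0)) ` under ?r e0"
      using Y same_index by blast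
    then show ?thesis using that by blast
  qed (use that in blast)
  have "(card_of Y, card_of (under ?r e0)) \<in> ordLeq"
    using card_of_mono1[OF e0] card_of_image by (rule ordLeq_transitive)
  then show ?thesis
    unfolding Y_def[symmetric] using card_of_under_ordLess[OF inf] ordLeq_ordLess_trans by blast
qed

lemma inj_graph_encode: "inj (\<lambda>f :: nat \<Rightarrow> nat. range (\<lambda>n. prod_encode (n, f n)))"
proof (rule injI)
  fix f g :: "nat \<Rightarrow> nat"
  assume graph: "range (\<lambda>n. prod_encode (n, f n)) = range (\<lambda>n. prod_encode (n, g n))"
  show "f = g"
  proof
    fix n
    have "prod_encode (n, f n) \<in> range (\<lambda>n. prod_encode (n, g n))"
      unfolding graph[symmetric] by blast
    then show "f n = g n" by (auto simp: prod_encode_eq)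
  qed
qed

lemma surj_real_to_nat_fun: "\<exists>H :: real \<Rightarrow> nat \<Rightarrow> nat. surj H"
proof -
  obtain b :: "nat set \<Rightarrow> real" where "bij b"
    using nat_sets_eqpoll_reals unfolding eqpoll_def by blast
  then have "inj (b \<circ> (\<lambda>f :: nat \<Rightarrow> nat. range (\<lambda>n. prod_encode (n, f n))))"
    using inj_graph_encode bij_is_inj inj_compose by blast
  then show ?thesis using inj_imp_surj_inv by blast
qed

lemma image_space_subset:
  assumes "\<And>e. selective (p e)"
  shows "image_space p H \<subseteq> beta_omega" "omega_pts \<subseteq> image_space p H"
  using omega_pts_subset_beta_omega uf_uf_image free_uf_uf[OF selective_free_uf[OF assms]]
  by (auto simp: image_space_def uf_iff_beta_omega)

lemma image_space_rel_countably_compact: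
  fixes p :: "'k \<Rightarrow> nat set set" and I :: "'i set"
  assumes "regularCard (card_of (UNIV :: 'k set))" "surj H" "\<And>e. selective (p e)"
    and "(card_of I, card_of (UNIV :: 'k set)) \<in> ordLess"
  shows "rel_countably_compact (product_topology (\<lambda>_. subtopology beta_omega_top (image_space p H)) I)
    (PiE I (\<lambda>_. omega_pts))"
  using image_space_limits[OF assms(1,2) selective_free_uf[OF assms(3)] assms(4)]
  by (intro rel_countably_compact_PiE_omega_pts image_space_subset[where p = p, OF assms(3)])

lemma image_space_not_pseudocompact:
  fixes p :: "'k \<Rightarrow> nat set set"
  assumes "infinite (UNIV :: 'k set)" "(card_of (UNIV :: 'k set), card_of (UNIV :: nat set set)) \<in> ordLeq"
    and sel: "\<And>e. selective (p e)" and inc: "\<And>e e'. e \<noteq> e' \<Longrightarrow> incomparable (p e) (p e')"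
  shows "\<not> pseudocompact (vietoris (subtopology beta_omega_top (image_space p H)))"
proof (rule not_pseudocompact_vietoris[OF image_space_subset[where p = p, OF sel]])
  fix r assume "free_uf r"
  show "(card_of {y \<in> image_space p H. free_uf y \<and> uf_image height y = r},
      card_of (UNIV :: nat set set)) \<in> ordLess"
  proof (rule ordLess_ordLeq_trans[OF _ assms(2)])
    show "(card_of {y \<in> image_space p H. free_uf y \<and> uf_image height y = r},
        card_of (UNIV :: 'k set)) \<in> ordLess"
      by (rule image_space_fibre_small) (use assms(1) sel inc \<open>free_uf r\<close> in auto)
  qed
qed

lemma selective_family_indexing:
  assumes "(card_of Q, card_of (UNIV :: 'k set)) \<in> ordIso" "\<forall>q\<in>Q. selective q"
    and "\<forall>q0\<in>Q. \<forall>q1\<in>Q. q0 \<noteq> q1 \<longrightarrow> incomparable q0 q1"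
  obtains p :: "'k \<Rightarrow> nat set set"
  where "\<And>e. selective (p e)" "\<And>e e'. e \<noteq> e' \<Longrightarrow> incomparable (p e) (p e')"
proof -
  obtain p where p: "bij_betw p (UNIV :: 'k set) Q"
    using card_of_ordIso ordIso_symmetric[OF assms(1)] by blast
  have pQ: "p e \<in> Q" for e using bij_betw_apply[OF p] by simp
  have sel: "selective (p e)" for e using assms(2) pQ by blast
  have inc: "incomparable (p e) (p e')" if ne: "e \<noteq> e'" for e e'
  proof -
    have "p e \<noteq> p e'" using ne inj_eq[OF bij_betw_imp_inj_on[OF p]] by simp
    then show ?thesis using assms(3) pQ by blast
  qed
  from sel inc show ?thesis by (rule that)
qed

theorem mainTheorem8:
  assumes "regularCard (card_of (UNIV :: real set))"
    and "\<exists>Q. (card_of Q, card_of (UNIV :: real set)) \<in> ordIso \<and> (\<forall>q\<in>Q. selective q) \<and>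
              (\<forall>q0\<in>Q. \<forall>q1\<in>Q. q0 \<noteq> q1 \<longrightarrow> incomparable q0 q1)"
  shows "\<exists>X. omega_pts \<subseteq> X \<and> X \<subseteq> beta_omega \<and>
           (\<forall>I :: real set. (card_of I, card_of (UNIV :: real set)) \<in> ordLess \<longrightarrow>
              rel_countably_compact
                (product_topology (\<lambda>_. subtopology beta_omega_top X) I)
                (PiE I (\<lambda>_. omega_pts))) \<and>
           \<not> pseudocompact (vietoris (subtopology beta_omega_top X))"
proof -
  obtain Q where "(card_of Q, card_of (UNIV :: real set)) \<in> ordIso" "\<forall>q\<in>Q. selective q"
    "\<forall>q0\<in>Q. \<forall>q1\<in>Q. q0 \<noteq> q1 \<longrightarrow> incomparable q0 q1"
    using assms(2) by (elim exE conjE)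
  then obtain p :: "real \<Rightarrow> nat set set" where sel: "\<And>e. selective (p e)"
    and inc: "\<And>e e'. e \<noteq> e' \<Longrightarrow> incomparable (p e) (p e')"
    by (rule selective_family_indexing) blast
  obtain H :: "real \<Rightarrow> nat \<Rightarrow> nat" where H: "surj H"
    using surj_real_to_nat_fun by blast
  have c: "(card_of (UNIV :: real set), card_of (UNIV :: nat set set)) \<in> ordLeq"
    using nat_sets_eqpoll_reals eqpoll_iff_card_of_ordIso ordIso_iff_ordLeq by blast
  show ?thesis
  proof (intro exI conjI allI impI)
    show "omega_pts \<subseteq> image_space p H" "image_space p H \<subseteq> beta_omega"
      using image_space_subset[where p = p, OF sel] by simp_all
    show "rel_countably_compact (product_topology (\<lambda>_. subtopology beta_omega_top (image_space p H)) I)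
        (PiE I (\<lambda>_. omega_pts))" if "(card_of I, card_of (UNIV :: real set)) \<in> ordLess" for I
      using image_space_rel_countably_compact[where p = p, OF assms(1) H sel that] .
    show "\<not> pseudocompact (vietoris (subtopology beta_omega_top (image_space p H)))"
      using image_space_not_pseudocompact[where p = p, OF infinite_UNIV_char_0 c sel inc] .
  qed
qed

end
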